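(* Let $\Gamma$ be a typing environment and $\tau$ a refinement type all of whose refinements are local. Then $\Gamma\vdash\tau\preceq\lceil\tau\rceil$ and $\Gamma\vdash\lceil\tau\rceil\preceq\tau$ hold in the gradual refinement type system.
   Context: Refinement types $\tau ::= \{v{:}b\mid p\}\mid x{:}\tau\to\tau$ with $b\in\{\mathrm{Int},\mathrm{Bool}\}$. A predicate $p$ refining $v$ is local iff for every closing substitution $\theta$ there is a value $w$ with $\theta(p[w/v])$ evaluating to true. $\lceil\tau\rceil$ replaces every refinement by the unknown refinement: $\lceil\{v{:}b\mid p\}\rceil=\{v{:}b\mid ?\}$, $\lceil x{:}\tau_x\to\tau\rceil = x{:}\lceil\tau_x\rceil\to\lceil\tau\rceil$. Gradual predicates are $p$ or $p\land ?$ ($p$ local; $?$ means $\mathrm{true}\land ?$). Specificity: $p_1\preceq p_2$ iff for all closing $\theta$, $\theta(p_1)$ true implies $\theta(p_2)$ true. Concretization: $\gamma(p)=\{p\}$, $\gamma(p\land ?)=\{p'\mid p'\preceq p,\ p'$ local$\}$, extended pointwise to types and environments. Gradual subtyping: for functions, $\Gamma\vdash x{:}\tau_{x1}\to\tau_1\preceq x{:}\tau_{x2}\to\tau_2$ if $\Gamma\vdash\tau_{x2}\preceq\tau_{x1}$ and $\Gamma,x{:}\tau_{x2}\vdash\tau_1\preceq\tau_2$; for base types, $\tilde\Gamma\vdash\{v{:}b\mid\tilde p_1\}\preceq\{v{:}b\mid\tilde p_2\}$ holds iff there exist $\Gamma'\in\gamma(\tilde\Gamma)$, $p_i\in\gamma(\tilde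 p_i)$ such that for every substitution $\theta$ of the variables of $\Gamma',v{:}b$ by values of their types, $\theta(p_1)$ true implies $\theta(p_2)$ true. *)

theory Defs
  imports Main
begin

type_synonym var = string

datatype base = BInt | BBool

datatype val = VInt int | VBool bool

fun has_base :: "val \<Rightarrow> base \<Rightarrow> bool" where
  "has_base (VInt _) b = (b = BInt)"
| "has_base (VBool _) b = (b = BBool)"

text \<open>A predicate refining the distinguished refinement variable v is modelled
semantically: given the value w substituted for v and a closing substitution
theta for all other variables, it yields the truth value of theta(p[w/v]).\<close>
type_synonym refn = "val \<Rightarrow> (var \<Rightarrow> val) \<Rightarrow> bool"

definition local :: "base \<Rightarrow> refn \<Rightarrow> bool" where
  "local b p \<longleftrightarrow> (\<forall>\<theta>. \<exists>w. has_base w b \<and> p w \<theta>)"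

definition spec :: "refn \<Rightarrow> refn \<Rightarrow> bool" where
  "spec p1 p2 \<longleftrightarrow> (\<forall>w \<theta>. p1 w \<theta> \<longrightarrow> p2 w \<theta>)"

datatype ty = TBase base refn | TFun var ty ty

datatype gpred = GStatic refn | GImp refn  \<comment> \<open>p or p \<and> ?\<close>

datatype gty = GBase base gpred | GFun var gty gty

fun embed :: "ty \<Rightarrow> gty" where
  "embed (TBase b p) = GBase b (GStatic p)"
| "embed (TFun x a r) = GFun x (embed a) (embed r)"

text \<open>The unknown refinement ? is true \<and> ?.\<close>
fun unk :: "ty \<Rightarrow> gty" where
  "unk (TBase b p) = GBase b (GImp (\<lambda>_ _. True))"
| "unk (TFun x a r) = GFun x (unk a) (unk r)"

fun all_local :: "ty \<Rightarrow> bool" where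
  "all_local (TBase b p) = local b p"
| "all_local (TFun x a r) = (all_local a \<and> all_local r)"

fun gty_wf :: "gty \<Rightarrow> bool" where
  "gty_wf (GBase b (GStatic p)) = True"
| "gty_wf (GBase b (GImp p)) = local b p"
| "gty_wf (GFun x a r) = (gty_wf a \<and> gty_wf r)"

fun gamma_pred :: "base \<Rightarrow> gpred \<Rightarrow> refn set" where
  "gamma_pred b (GStatic p) = {p}"
| "gamma_pred b (GImp p) = {p'. spec p' p \<and> local b p'}"

fun gamma_ty :: "gty \<Rightarrow> ty set" where
  "gamma_ty (GBase b gp) = {TBase b p | p. p \<in> gamma_pred b gp}"
| "gamma_ty (GFun x a r) = {TFun x a' r' | a' r'. a' \<in> gamma_ty a \<and> r' \<in> gamma_ty r}"

text \<open>Environments: lists of bindings; extension \<Gamma>, x:\<tau> is (x,\<tau>) # \<Gamma>,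
so the most recent binding of a variable is found first.\<close>
type_synonym senv = "(var \<times> ty) list"
type_synonym genv = "(var \<times> gty) list"

definition gamma_env :: "genv \<Rightarrow> senv set" where
  "gamma_env G = {E. list_all2 (\<lambda>(x, g) (y, t). x = y \<and> t \<in> gamma_ty g) G E}"

definition closes_env :: "senv \<Rightarrow> (var \<Rightarrow> val) \<Rightarrow> bool" where
  "closes_env E \<theta> \<longleftrightarrow> (\<forall>x b p. map_of E x = Some (TBase b p) \<longrightarrow> has_base (\<theta> x) b)"

inductive gsub :: "genv \<Rightarrow> gty \<Rightarrow> gty \<Rightarrow> bool" where
  gsub_base: "\<lbrakk> E \<in> gamma_env G; p1 \<in> gamma_pred b gp1; p2 \<in> gamma_pred b gp2;
      \<forall>\<theta> w. closes_env E \<theta> \<and> has_base w b \<longrightarrow> p1 w \<theta> \<longrightarrow> p2 w \<theta> \<rbrakk>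
    \<Longrightarrow> gsub G (GBase b gp1) (GBase b gp2)"
| gsub_fun: "\<lbrakk> gsub G a2 a1; gsub ((x, a2) # G) r1 r2 \<rbrakk>
    \<Longrightarrow> gsub G (GFun x a1 r1) (GFun x a2 r2)"

end

theory Submission
  imports Defs
begin

text \<open>Since \<open>p\<close> is local, it lies in the concretization of the unknown refinement
\<open>?\<close>, so at base types both subtyping judgments are witnessed by choosing \<open>p\<close> on
both sides, where they become the trivial implication \<open>p \<Longrightarrow> p\<close>. Function types
follow componentwise. The environment matters only through the existence of
some concretization, which well-formedness of its entries guarantees.\<close>

lemma embed_in_gamma_ty: "\<tau> \<in> gamma_ty (embed \<tau>)"
  by (induction \<tau>) auto

lemma all_local_in_gamma_ty_unk: "all_local \<tau> \<Longrightarrow> \<tau> \<in> gamma_ty (unk \<tau>)"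
  by (induction \<tau>) (auto simp: spec_def)

lemma gamma_ty_nonempty: "gty_wf g \<Longrightarrow> gamma_ty g \<noteq> {}"
proof (induction g)
  case (GBase b gp)
  then show ?case
    by (cases gp) (auto simp: spec_def)
qed auto

lemma Cons_in_gamma_env:
  "(x, t) # E \<in> gamma_env ((x, g) # G) \<longleftrightarrow> t \<in> gamma_ty g \<and> E \<in> gamma_env G"
  by (simp add: gamma_env_def)

lemma gamma_env_nonempty: "\<forall>(x, g) \<in> set G. gty_wf g \<Longrightarrow> gamma_env G \<noteq> {}"
proof (induction G)
  case Nil
  then show ?case
    by (auto simp: gamma_env_def)
next
  case (Cons xg G)
  obtain x g where xg: "xg = (x, g)"
    by fastforce
  from Cons xg obtain E t where "E \<in> gamma_env G" "t \<in> gamma_ty g"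
    using gamma_ty_nonempty by fastforce
  then have "(x, t) # E \<in> gamma_env ((x, g) # G)"
    by (simp add: Cons_in_gamma_env)
  then show ?case
    using xg by blast
qed

lemma gsub_GStatic_left:
  "gamma_env G \<noteq> {} \<Longrightarrow> p \<in> gamma_pred b gp \<Longrightarrow> gsub G (GBase b (GStatic p)) (GBase b gp)"
  by (auto intro: gsub_base)

lemma gsub_GStatic_right:
  "gamma_env G \<noteq> {} \<Longrightarrow> p \<in> gamma_pred b gp \<Longrightarrow> gsub G (GBase b gp) (GBase b (GStatic p))"
  by (auto intro: gsub_base)

lemma gsub_embed_unk:
  assumes "gamma_env G \<noteq> {}" and "all_local \<tau>"
  shows "gsub G (embed \<tau>) (unk \<tau>) \<and> gsub G (unk \<tau>) (embed \<tau>)"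
  using assms
proof (induction \<tau> arbitrary: G)
  case (TBase b p)
  then have "p \<in> gamma_pred b (GImp (\<lambda>_ _. True))"
    by (simp add: spec_def)
  with TBase.prems(1) show ?case
    by (simp add: gsub_GStatic_left gsub_GStatic_right)
next
  case (TFun x a r)
  from TFun.prems obtain E where E: "E \<in> gamma_env G"
    by auto
  have "(x, a) # E \<in> gamma_env ((x, unk a) # G)" "(x, a) # E \<in> gamma_env ((x, embed a) # G)"
    using E TFun.prems(2)
    by (simp_all add: Cons_in_gamma_env embed_in_gamma_ty all_local_in_gamma_ty_unk)
  then have "gsub ((x, unk a) # G) (embed r) (unk r)" "gsub ((x, embed a) # G) (unk r) (embed r)"
    using TFun.IH(2) TFun.prems(2) by fastforce+
  moreover have "gsub G (embed a) (unk a)" "gsub G (unk a) (embed a)"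
    using TFun.IH(1) TFun.prems by auto
  ultimately show ?case
    by (simp add: gsub_fun)
qed

theorem mainTheorem6:
  fixes G :: genv and \<tau> :: ty
  assumes "\<forall>(x, g) \<in> set G. gty_wf g"
    and "all_local \<tau>"
  shows "gsub G (embed \<tau>) (unk \<tau>) \<and> gsub G (unk \<tau>) (embed \<tau>)"
  using gsub_embed_unk gamma_env_nonempty assms by blast

end
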